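(* Let $\beta,\delta\in(0,1)$, $K>0$, and let $\eta_1,\eta_2\ge0$ be constants with $\delta>\eta_2$. Consider $$\frac{df}{dt}=\tfrac12 fm\beta L-\delta f-\eta_1 f,\qquad \frac{dm}{dt}=\tfrac12 fm\beta L-\delta m+\eta_2 m,\qquad L=1-\frac{f+m}{K}.$$ If $\beta K<2\delta+\eta_1-\eta_2$, then the equilibrium $(0,0)$ is globally asymptotically stable.
   Context: $f$ and $m$ are female and male densities. $\eta_1$ is the female removal (harvesting) rate and $\eta_2$ the male addition (stocking) rate; this is the "female harvesting male stocking" model. The standing assumption is $\delta>\eta_2$ whenever $\eta_2\neq0$. *)

theory Defs
  imports "HOL-Analysis.Analysis"
begin

definition Lmat :: "real \<Rightarrow> real \<Rightarrow> real \<Rightarrow> real" where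
  "Lmat K f m = 1 - (f + m) / K"

definition rhs_f :: "real \<Rightarrow> real \<Rightarrow> real \<Rightarrow> real \<Rightarrow> real \<Rightarrow> real \<Rightarrow> real \<Rightarrow> real" where
  "rhs_f \<beta> \<delta> K \<eta>1 \<eta>2 f m = (1/2) * f * m * \<beta> * Lmat K f m - \<delta> * f - \<eta>1 * f"

definition rhs_m :: "real \<Rightarrow> real \<Rightarrow> real \<Rightarrow> real \<Rightarrow> real \<Rightarrow> real \<Rightarrow> real \<Rightarrow> real" where
  "rhs_m \<beta> \<delta> K \<eta>1 \<eta>2 f m = (1/2) * f * m * \<beta> * Lmat K f m - \<delta> * m + \<eta>2 * m"

definition fhms_solution ::
  "real \<Rightarrow> real \<Rightarrow> real \<Rightarrow> real \<Rightarrow> real \<Rightarrow> (real \<Rightarrow> real) \<Rightarrow> (real \<Rightarrow> real) \<Rightarrow> bool" where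
  "fhms_solution \<beta> \<delta> K \<eta>1 \<eta>2 f m \<longleftrightarrow>
     f 0 \<ge> 0 \<and> m 0 \<ge> 0 \<and>
     (\<forall>t\<ge>0. (f has_real_derivative rhs_f \<beta> \<delta> K \<eta>1 \<eta>2 (f t) (m t)) (at t within {0..}) \<and>
             (m has_real_derivative rhs_m \<beta> \<delta> K \<eta>1 \<eta>2 (f t) (m t)) (at t within {0..}))"

definition origin_GAS :: "real \<Rightarrow> real \<Rightarrow> real \<Rightarrow> real \<Rightarrow> real \<Rightarrow> bool" where
  "origin_GAS \<beta> \<delta> K \<eta>1 \<eta>2 \<longleftrightarrow>
     rhs_f \<beta> \<delta> K \<eta>1 \<eta>2 0 0 = 0 \<and> rhs_m \<beta> \<delta> K \<eta>1 \<eta>2 0 0 = 0 \<and>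
     (\<forall>\<epsilon>>0. \<exists>r>0. \<forall>f m. fhms_solution \<beta> \<delta> K \<eta>1 \<eta>2 f m \<and> norm (f 0, m 0) < r \<longrightarrow>
         (\<forall>t\<ge>0. norm (f t, m t) < \<epsilon>)) \<and>
     (\<forall>f m. fhms_solution \<beta> \<delta> K \<eta>1 \<eta>2 f m \<longrightarrow>
         ((\<lambda>t. (f t, m t)) \<longlongrightarrow> (0, 0)) at_top)"

end

theory Submission
  imports Defs "HOL-Real_Asymp.Real_Asymp"
begin

text \<open>The total population \<open>N = f + m\<close> obeys
  \<open>N' = \<beta> f m L - (\<delta> + \<eta>1) f - (\<delta> - \<eta>2) m\<close>. On the nonnegative quadrant the mating term
  is at most \<open>\<beta>K/4 \<cdot> min f m\<close>, and the hypothesis \<open>\<beta>K < 2\<delta> + \<eta>1 - \<eta>2\<close> makes this at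
  most a quarter of the two loss terms. Hence \<open>N' \<le> -3/4 (\<delta> - \<eta>2) N\<close>, so \<open>N\<close> decays
  exponentially, which gives both stability and attraction of the origin. The quadrant is
  invariant because each equation has the form \<open>x' = x \<cdot> g(t)\<close>.\<close>

lemma DERIV_nonpos_imp_decreasing_within:
  fixes h h' :: "real \<Rightarrow> real"
  assumes "a \<le> b" "{a..b} \<subseteq> S"
    and deriv: "\<And>t. t \<in> {a..b} \<Longrightarrow> (h has_real_derivative h' t) (at t within S)"
    and nonpos: "\<And>t. t \<in> {a..b} \<Longrightarrow> h' t \<le> 0"
  shows "h b \<le> h a"
proof (rule DERIV_nonpos_imp_decreasing_open[OF \<open>a \<le> b\<close>])
  fix t assume t: "a < t" "t < b"
  have "t \<in> interior S"
    using t interior_mono[OF \<open>{a..b} \<subseteq> S\<close>] by auto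
  then have "at t within S = at t" by (rule at_within_interior)
  then show "\<exists>y. (h has_real_derivative y) (at t) \<and> y \<le> 0"
    using deriv[of t] nonpos[of t] t by auto
next
  show "continuous_on {a..b} h"
    using deriv \<open>{a..b} \<subseteq> S\<close>
    by (intro DERIV_continuous_on) (auto intro: has_field_derivative_subset)
qed

lemma DERIV_le_linear_imp_exp_bound:
  fixes h h' :: "real \<Rightarrow> real"
  assumes "a \<le> b" "{a..b} \<subseteq> S"
    and deriv: "\<And>t. t \<in> {a..b} \<Longrightarrow> (h has_real_derivative h' t) (at t within S)"
    and growth: "\<And>t. t \<in> {a..b} \<Longrightarrow> h' t \<le> c * h t"
  shows "h b \<le> h a * exp (c * (b - a))"
proof -
  define W where "W t = h t * exp (- c * t)" for t
  have "W b \<le> W a"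
  proof (rule DERIV_nonpos_imp_decreasing_within[OF assms(1,2)])
    fix t assume t: "t \<in> {a..b}"
    show "(W has_real_derivative (h' t - c * h t) * exp (- c * t)) (at t within S)"
      unfolding W_def using deriv[OF t]
      by (auto intro!: derivative_eq_intros simp: algebra_simps)
    show "(h' t - c * h t) * exp (- c * t) \<le> 0"
      using growth[OF t] by (simp add: mult_nonpos_nonneg)
  qed
  then have "h b * exp (- c * b) * exp (c * b) \<le> h a * exp (- c * a) * exp (c * b)"
    unfolding W_def by (intro mult_right_mono) auto
  then show ?thesis
    by (simp add: mult.assoc flip: exp_add) (simp add: algebra_simps)
qed

text \<open>The exponential bound applied to \<open>x\<^sup>2\<close>, whose growth rate is at most \<open>2 max |g|\<close>,
  shows that \<open>x\<close> stays zero once it vanishes; so it cannot change sign.\<close>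

lemma nonneg_if_DERIV_proportional:
  fixes x g :: "real \<Rightarrow> real"
  assumes "x a \<ge> 0" "a \<le> b" "{a..b} \<subseteq> S"
    and deriv: "\<And>t. t \<in> {a..b} \<Longrightarrow> (x has_real_derivative x t * g t) (at t within S)"
    and "continuous_on {a..b} g"
  shows "x b \<ge> 0"
proof (rule ccontr)
  assume "\<not> x b \<ge> 0"
  have "continuous_on {a..b} x"
    using deriv \<open>{a..b} \<subseteq> S\<close>
    by (intro DERIV_continuous_on) (auto intro: has_field_derivative_subset)
  then obtain t0 where t0: "a \<le> t0" "t0 \<le> b" "x t0 = 0"
    using IVT2'[of x b 0 a] \<open>x a \<ge> 0\<close> \<open>\<not> x b \<ge> 0\<close> \<open>a \<le> b\<close> by auto
  obtain M where M: "\<And>t. t \<in> {a..b} \<Longrightarrow> \<bar>g t\<bar> \<le> M"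
    using compact_imp_bounded[OF compact_continuous_image[OF \<open>continuous_on {a..b} g\<close>]]
    by (force simp: bounded_iff)
  have "(x b)\<^sup>2 \<le> (x t0)\<^sup>2 * exp (2 * M * (b - t0))"
  proof (rule DERIV_le_linear_imp_exp_bound[where S = S])
    show "{t0..b} \<subseteq> S" using t0 \<open>{a..b} \<subseteq> S\<close> by auto
    fix t assume t: "t \<in> {t0..b}"
    then have "t \<in> {a..b}" using t0 by auto
    show "((\<lambda>t. (x t)\<^sup>2) has_real_derivative 2 * g t * (x t)\<^sup>2) (at t within S)"
      using deriv[OF \<open>t \<in> {a..b}\<close>]
      by (auto intro!: derivative_eq_intros simp: power2_eq_square algebra_simps)
    have "g t * (x t)\<^sup>2 \<le> M * (x t)\<^sup>2"
      using M[OF \<open>t \<in> {a..b}\<close>] by (intro mult_right_mono) auto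
    then show "2 * g t * (x t)\<^sup>2 \<le> 2 * M * (x t)\<^sup>2" by simp
  qed (use t0 in auto)
  with \<open>x t0 = 0\<close> \<open>\<not> x b \<ge> 0\<close> show False by simp
qed

lemma logistic_factor_le:
  fixes f m K :: real
  assumes "f \<ge> 0" "m \<ge> 0" "K > 0"
  shows "f * (1 - (f + m) / K) \<le> K / 4"
proof -
  have "f * (1 - (f + m) / K) \<le> f * (1 - f / K)"
    using assms by (intro mult_left_mono) (auto simp: field_simps)
  also have "\<dots> = (K\<^sup>2 / 4 - (f - K / 2)\<^sup>2) / K"
    using assms by (simp add: field_simps power2_eq_square)
  also have "\<dots> \<le> (K\<^sup>2 / 4) / K"
    using assms by (intro divide_right_mono) auto
  also have "\<dots> = K / 4"
    by (simp add: power2_eq_square)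
  finally show ?thesis .
qed

lemma Lmat_commute: "Lmat K f m = Lmat K m f"
  by (simp add: Lmat_def add.commute)

lemma mating_term_le:
  fixes f m K \<beta> :: real
  assumes "f \<ge> 0" "m \<ge> 0" "K > 0" "\<beta> \<ge> 0"
  shows "f * m * \<beta> * Lmat K f m \<le> \<beta> * K / 4 * m"
proof -
  have "f * m * \<beta> * Lmat K f m = \<beta> * m * (f * (1 - (f + m) / K))"
    by (simp add: Lmat_def)
  also have "\<dots> \<le> \<beta> * m * (K / 4)"
    using logistic_factor_le[of f m K] assms by (intro mult_left_mono) auto
  finally show ?thesis by (simp add: mult_ac)
qed

lemma mating_term_le_min:
  fixes f m K \<beta> :: real
  assumes "f \<ge> 0" "m \<ge> 0" "K > 0" "\<beta> \<ge> 0"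
  shows "f * m * \<beta> * Lmat K f m \<le> \<beta> * K / 4 * min f m"
proof -
  have "f * m * \<beta> * Lmat K f m = m * f * \<beta> * Lmat K m f"
    by (simp add: Lmat_commute[of K f m])
  then have "f * m * \<beta> * Lmat K f m \<le> \<beta> * K / 4 * f"
    using mating_term_le[of m f K \<beta>] assms by linarith
  then show ?thesis
    using mating_term_le[of f m K \<beta>] assms by (cases "f \<le> m") (simp_all add: min_def)
qed

lemma mating_term_le_weighted:
  fixes f m K \<beta> a b :: real
  assumes "f \<ge> 0" "m \<ge> 0" "K > 0" "\<beta> \<ge> 0" "a \<ge> 0" "b \<ge> 0" "\<beta> * K \<le> a + b"
  shows "f * m * \<beta> * Lmat K f m \<le> (a * f + b * m) / 4"
proof -
  have "f * m * \<beta> * Lmat K f m \<le> \<beta> * K / 4 * min f m"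
    using mating_term_le_min assms by simp
  also have "\<dots> \<le> (a + b) / 4 * min f m"
    using assms by (intro mult_right_mono) auto
  also have "\<dots> \<le> (a * f + b * m) / 4"
    using assms by (auto simp: min_def algebra_simps intro: add_mono mult_left_mono)
  finally show ?thesis .
qed

lemma fhms_solution_deriv:
  assumes "fhms_solution \<beta> \<delta> K \<eta>1 \<eta>2 f m" "t \<ge> 0"
  shows "(f has_real_derivative rhs_f \<beta> \<delta> K \<eta>1 \<eta>2 (f t) (m t)) (at t within {0..})"
    and "(m has_real_derivative rhs_m \<beta> \<delta> K \<eta>1 \<eta>2 (f t) (m t)) (at t within {0..})"
  using assms by (auto simp: fhms_solution_def)

lemma fhms_solution_continuous:
  assumes "fhms_solution \<beta> \<delta> K \<eta>1 \<eta>2 f m"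
  shows "continuous_on {0..} f" "continuous_on {0..} m"
  by (rule DERIV_continuous_on, use fhms_solution_deriv[OF assms] in auto)+

lemma fhms_solution_nonneg:
  assumes sol: "fhms_solution \<beta> \<delta> K \<eta>1 \<eta>2 f m" and "t \<ge> 0"
  shows "f t \<ge> 0" "m t \<ge> 0"
proof -
  have L: "continuous_on {0..t} (\<lambda>s. Lmat K (f s) (m s))"
    and fc: "continuous_on {0..t} f" and mc: "continuous_on {0..t} m"
    using fhms_solution_continuous[OF sol] unfolding Lmat_def divide_inverse
    by (auto intro!: continuous_intros elim: continuous_on_subset)
  have f0: "f 0 \<ge> 0" and m0: "m 0 \<ge> 0"
    using sol by (auto simp: fhms_solution_def)
  define gf where "gf s = 1/2 * m s * \<beta> * Lmat K (f s) (m s) - \<delta> - \<eta>1" for s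
  define gm where "gm s = 1/2 * f s * \<beta> * Lmat K (f s) (m s) - \<delta> + \<eta>2" for s
  have "rhs_f \<beta> \<delta> K \<eta>1 \<eta>2 (f s) (m s) = f s * gf s"
    and "rhs_m \<beta> \<delta> K \<eta>1 \<eta>2 (f s) (m s) = m s * gm s" for s
    by (simp_all add: rhs_f_def rhs_m_def gf_def gm_def algebra_simps)
  then have "(f has_real_derivative f s * gf s) (at s within {0..})"
    and "(m has_real_derivative m s * gm s) (at s within {0..})" if "s \<in> {0..t}" for s
    using fhms_solution_deriv[OF sol, of s] that by auto
  moreover have "continuous_on {0..t} gf" "continuous_on {0..t} gm"
    unfolding gf_def gm_def by (intro continuous_intros L fc mc)+
  ultimately show "f t \<ge> 0" "m t \<ge> 0"
    using nonneg_if_DERIV_proportional[of _ 0 t "{0..}"] f0 m0 \<open>t \<ge> 0\<close> by auto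
qed

lemma fhms_solution_total_decay:
  assumes "\<beta> \<ge> 0" "K > 0" "\<eta>1 \<ge> 0" "\<eta>2 \<ge> 0" "\<eta>2 \<le> \<delta>"
    and "\<beta> * K \<le> 2 * \<delta> + \<eta>1 - \<eta>2"
    and sol: "fhms_solution \<beta> \<delta> K \<eta>1 \<eta>2 f m" and "t \<ge> 0"
  shows "f t + m t \<le> (f 0 + m 0) * exp (- (3/4 * (\<delta> - \<eta>2)) * t)"
proof -
  have "f t + m t \<le> (f 0 + m 0) * exp (- (3/4 * (\<delta> - \<eta>2)) * (t - 0))"
  proof (rule DERIV_le_linear_imp_exp_bound[where S = "{0..}"])
    fix s assume s: "s \<in> {0..t}"
    then show "((\<lambda>s. f s + m s) has_real_derivative
        rhs_f \<beta> \<delta> K \<eta>1 \<eta>2 (f s) (m s) + rhs_m \<beta> \<delta> K \<eta>1 \<eta>2 (f s) (m s)) (at s within {0..})"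
      using fhms_solution_deriv[OF sol, of s] by (auto intro: derivative_intros)
    let ?P = "f s * m s * \<beta> * Lmat K (f s) (m s)"
    have "f s \<ge> 0" "m s \<ge> 0" using fhms_solution_nonneg[OF sol] s by auto
    then have "?P \<le> ((\<delta> + \<eta>1) * f s + (\<delta> - \<eta>2) * m s) / 4"
      using assms by (intro mating_term_le_weighted) auto
    moreover have "(\<delta> - \<eta>2) * f s \<le> (\<delta> + \<eta>1) * f s"
      using assms \<open>f s \<ge> 0\<close> by (intro mult_right_mono) auto
    moreover have "rhs_f \<beta> \<delta> K \<eta>1 \<eta>2 (f s) (m s) + rhs_m \<beta> \<delta> K \<eta>1 \<eta>2 (f s) (m s)
        = ?P - (\<delta> + \<eta>1) * f s - (\<delta> - \<eta>2) * m s"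
      by (simp add: rhs_f_def rhs_m_def algebra_simps)
    ultimately have "rhs_f \<beta> \<delta> K \<eta>1 \<eta>2 (f s) (m s) + rhs_m \<beta> \<delta> K \<eta>1 \<eta>2 (f s) (m s)
        \<le> - 3/4 * ((\<delta> - \<eta>2) * f s + (\<delta> - \<eta>2) * m s)"
      by argo
    also have "\<dots> = - (3/4 * (\<delta> - \<eta>2)) * (f s + m s)"
      by (simp add: field_simps)
    finally show "rhs_f \<beta> \<delta> K \<eta>1 \<eta>2 (f s) (m s) + rhs_m \<beta> \<delta> K \<eta>1 \<eta>2 (f s) (m s)
        \<le> - (3/4 * (\<delta> - \<eta>2)) * (f s + m s)" .
  qed (use \<open>t \<ge> 0\<close> in auto)
  then show ?thesis by simp
qed

lemma origin_GAS_if_total_decay: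
  assumes "c > 0"
    and decay: "\<And>f m t. fhms_solution \<beta> \<delta> K \<eta>1 \<eta>2 f m \<Longrightarrow> t \<ge> 0 \<Longrightarrow>
      f t + m t \<le> (f 0 + m 0) * exp (- c * t)"
  shows "origin_GAS \<beta> \<delta> K \<eta>1 \<eta>2"
proof -
  have stable: "norm (f t, m t) < \<epsilon>"
    if sol: "fhms_solution \<beta> \<delta> K \<eta>1 \<eta>2 f m" and "norm (f 0, m 0) < \<epsilon> / 2" "t \<ge> 0"
    for f m \<epsilon> t
  proof -
    have "f t \<ge> 0" "m t \<ge> 0" "f 0 \<ge> 0" "m 0 \<ge> 0"
      using fhms_solution_nonneg[OF sol] \<open>t \<ge> 0\<close> by auto
    have "norm (f t, m t) \<le> f t + m t"
      using norm_Pair_le[of "f t" "m t"] \<open>f t \<ge> 0\<close> \<open>m t \<ge> 0\<close> by simp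
    also have "\<dots> \<le> (f 0 + m 0) * exp (- c * t)"
      using decay[OF sol \<open>t \<ge> 0\<close>] .
    also have "\<dots> \<le> f 0 + m 0"
      using \<open>c > 0\<close> \<open>t \<ge> 0\<close> \<open>f 0 \<ge> 0\<close> \<open>m 0 \<ge> 0\<close> by (intro mult_left_le) auto
    also have "\<dots> \<le> 2 * norm (f 0, m 0)"
      using norm_fst_le[of "f 0" "m 0"] norm_snd_le[of "m 0" "f 0"] by simp
    finally show ?thesis using that by simp
  qed
  have attractive: "((\<lambda>t. (f t, m t)) \<longlongrightarrow> (0, 0)) at_top"
    if sol: "fhms_solution \<beta> \<delta> K \<eta>1 \<eta>2 f m" for f m
  proof -
    have bound: "\<forall>\<^sub>F t in at_top. 0 \<le> f t \<and> 0 \<le> m t \<and> f t + m t \<le> (f 0 + m 0) * exp (- c * t)"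
      using eventually_ge_at_top[of "0::real"]
      by eventually_elim (use fhms_solution_nonneg[OF sol] decay[OF sol] in auto)
    have "((\<lambda>t. exp (- c * t)) \<longlongrightarrow> 0) at_top"
      using \<open>c > 0\<close> by real_asymp
    then have upper: "((\<lambda>t. (f 0 + m 0) * exp (- c * t)) \<longlongrightarrow> 0) at_top"
      by (rule tendsto_mult_right_zero)
    have "(f \<longlongrightarrow> 0) at_top" "(m \<longlongrightarrow> 0) at_top"
      by (rule tendsto_sandwich[OF _ _ tendsto_const upper]; use bound in \<open>auto elim: eventually_mono\<close>)+
    then show ?thesis by (rule tendsto_Pair)
  qed
  have "\<exists>r>0. \<forall>f m. fhms_solution \<beta> \<delta> K \<eta>1 \<eta>2 f m \<and> norm (f 0, m 0) < r \<longrightarrow>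
      (\<forall>t\<ge>0. norm (f t, m t) < \<epsilon>)" if "\<epsilon> > 0" for \<epsilon>
    using stable \<open>\<epsilon> > 0\<close> by (intro exI[of _ "\<epsilon> / 2"]) auto
  then show ?thesis
    unfolding origin_GAS_def using attractive by (simp add: rhs_f_def rhs_m_def)
qed

theorem mainTheorem4:
  fixes \<beta> \<delta> K \<eta>1 \<eta>2 :: real
  assumes "0 < \<beta>" "\<beta> < 1" "0 < \<delta>" "\<delta> < 1" "K > 0"
    and "\<eta>1 \<ge> 0" "\<eta>2 \<ge> 0" "\<delta> > \<eta>2"
    and "\<beta> * K < 2 * \<delta> + \<eta>1 - \<eta>2"
  shows "origin_GAS \<beta> \<delta> K \<eta>1 \<eta>2"
proof (rule origin_GAS_if_total_decay)
  show "3/4 * (\<delta> - \<eta>2) > 0" using assms by simp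
  show "f t + m t \<le> (f 0 + m 0) * exp (- (3/4 * (\<delta> - \<eta>2)) * t)"
    if "fhms_solution \<beta> \<delta> K \<eta>1 \<eta>2 f m" "t \<ge> 0" for f m t
    using assms that by (intro fhms_solution_total_decay) auto
qed

end
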